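(* Let $1\le p<\infty$ and $k>0$. The set of isomorphism classes of compact pmm-spaces, endowed with the metric $\mathsf{PGW}^k_p$, is not complete.
   Context: A pmm-space is a triple $(X,d_X,\mu_X)$ with $(X,d_X)$ a complete separable metric space and $\mu_X$ a Borel probability measure; compact means $(X,d_X)$ compact. Isomorphic means there is a measure-preserving isometric bijection. For a measure $\pi$ on $X\times Y$, $\pi_X,\pi_Y$ are its marginals and $\|d_X-d_Y\|_{L^p(\pi\otimes\pi)}=\left(\iint|d_X(x,x')-d_Y(y,y')|^p\,d\pi(x,y)\,d\pi(x',y')\right)^{1/p}$. For scalar $\epsilon\ge0$: $\mathsf{PGW}_{\epsilon,p}(X,Y)=\inf\{\|d_X-d_Y\|_{L^p(\pi\otimes\pi)}:\pi$ Borel probability measure on $X\times Y$, $\pi_X\le(1+\epsilon)\mu_X$, $\pi_Y\le(1+\epsilon)\mu_Y$ setwise$\}$, and $\mathsf{PGW}^k_p(X,Y)=\inf\{\frac{\epsilon}{1+\epsilon}:\epsilon\ge0,\ \mathsf{PGW}_{\epsilon,p}(X,Y)\le k\epsilon\}$. *)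

theory Defs
  imports "HOL-Probability.Probability"
begin

definition borel_of :: "'a topology \<Rightarrow> 'a measure" where
  "borel_of T = sigma (topspace T) {U. openin T U}"

text \<open>A pmm-space is represented as a triple (X, d, mu): carrier set X, metric d on X,
  and a Borel probability measure mu on the metric topology of (X,d).\<close>
type_synonym 'a pmm = "'a set \<times> ('a \<Rightarrow> 'a \<Rightarrow> real) \<times> 'a measure"

definition pmm_space :: "'a pmm \<Rightarrow> bool" where
  "pmm_space \<X> \<longleftrightarrow> (case \<X> of (X, d, \<mu>) \<Rightarrow>
     Metric_space X d \<and> Metric_space.mcomplete X d \<and>
     separable_space (Metric_space.mtopology X d) \<and>
     prob_space \<mu> \<and> space \<mu> = X \<and>
     sets \<mu> = sets (borel_of (Metric_space.mtopology X d)))"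

definition compact_pmm_space :: "'a pmm \<Rightarrow> bool" where
  "compact_pmm_space \<X> \<longleftrightarrow> pmm_space \<X> \<and>
     (case \<X> of (X, d, \<mu>) \<Rightarrow> compact_space (Metric_space.mtopology X d))"

definition pgw_couplings :: "real \<Rightarrow> 'a pmm \<Rightarrow> 'b pmm \<Rightarrow> ('a \<times> 'b) measure set" where
  "pgw_couplings \<epsilon> \<X> \<Y> = (case \<X> of (X, dX, \<mu>X) \<Rightarrow> case \<Y> of (Y, dY, \<mu>Y) \<Rightarrow>
     {\<pi>. prob_space \<pi> \<and> space \<pi> = X \<times> Y \<and>
        sets \<pi> = sets (borel_of (prod_topology (Metric_space.mtopology X dX)
                                              (Metric_space.mtopology Y dY))) \<and>
        (\<forall>A \<in> sets \<mu>X. emeasure \<pi> (A \<times> Y) \<le> ennreal (1 + \<epsilon>) * emeasure \<mu>X A) \<and>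
        (\<forall>B \<in> sets \<mu>Y. emeasure \<pi> (X \<times> B) \<le> ennreal (1 + \<epsilon>) * emeasure \<mu>Y B)})"

definition dist_Lp :: "real \<Rightarrow> 'a pmm \<Rightarrow> 'b pmm \<Rightarrow> ('a \<times> 'b) measure \<Rightarrow> real" where
  "dist_Lp p \<X> \<Y> \<pi> = (case \<X> of (X, dX, \<mu>X) \<Rightarrow> case \<Y> of (Y, dY, \<mu>Y) \<Rightarrow>
     (enn2real (\<integral>\<^sup>+ z. \<integral>\<^sup>+ z'. ennreal (\<bar>dX (fst z) (fst z') - dY (snd z) (snd z')\<bar> powr p) \<partial>\<pi> \<partial>\<pi>))
       powr (1 / p))"

definition PGW_eps :: "real \<Rightarrow> real \<Rightarrow> 'a pmm \<Rightarrow> 'b pmm \<Rightarrow> real" where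
  "PGW_eps \<epsilon> p \<X> \<Y> = Inf (dist_Lp p \<X> \<Y> ` pgw_couplings \<epsilon> \<X> \<Y>)"

definition PGW_k :: "real \<Rightarrow> real \<Rightarrow> 'a pmm \<Rightarrow> 'b pmm \<Rightarrow> real" where
  "PGW_k k p \<X> \<Y> = Inf {\<epsilon> / (1 + \<epsilon>) | \<epsilon>. \<epsilon> \<ge> 0 \<and> PGW_eps \<epsilon> p \<X> \<Y> \<le> k * \<epsilon>}"

end

theory Submission
  imports Defs
begin

text \<open>
  Let \<open>X\<^sub>n\<close> be \<open>{0, 1, \<dots>, n} \<subseteq> \<real>\<close> with the masses \<open>1/2, 1/4, \<dots>, 2\<^sup>-\<^sup>n, 2\<^sup>-\<^sup>n\<close>.
  For \<open>N \<le> m, n\<close> the spaces \<open>X\<^sub>m\<close> and \<open>X\<^sub>n\<close> share the part \<open>{0, \<dots>, N - 1}\<close> of mass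
  \<open>1 - 2\<^sup>-\<^sup>N\<close>; its diagonal coupling, rescaled to a probability measure, has zero distortion
  and marginals below \<open>(1 + \<epsilon>)\<close> times the given ones for \<open>\<epsilon>/(1 + \<epsilon>) = 2\<^sup>-\<^sup>N\<close>. Hence the
  sequence is Cauchy.

  A compact limit \<open>Y\<close> would have a finite diameter \<open>D\<close>; fix \<open>j \<ge> D + 1\<close>. For small \<open>\<epsilon>\<close>,
  every admissible coupling of \<open>X\<^sub>n\<close> (\<open>n > j\<close>) with \<open>Y\<close> puts mass at least \<open>1/4\<close> on
  \<open>{0} \<times> Y\<close> and at least \<open>2\<^sup>-\<^sup>j\<^sup>-\<^sup>2\<close> on \<open>{j} \<times> Y\<close>, and between these two sets the distortion
  \<open>|j - d\<^sub>Y|\<close> is at least \<open>1\<close>. So \<open>PGW\<^sub>\<epsilon>\<^sub>,\<^sub>p(X\<^sub>n, Y)\<close> is bounded below independently of \<open>n\<close>,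
  every \<open>\<epsilon>\<close> admissible in \<open>PGW\<^sup>k\<^sub>p\<close> exceeds a fixed \<open>\<epsilon>\<^sub>0 > 0\<close>, and
  \<open>PGW\<^sup>k\<^sub>p(X\<^sub>n, Y) \<ge> \<epsilon>\<^sub>0/(1 + \<epsilon>\<^sub>0)\<close> for all \<open>n > j\<close>.
\<close>

lemma space_borel_of [simp]: "space (borel_of T) = topspace T"
  unfolding borel_of_def by (subst space_measure_of) (auto dest: openin_subset)

lemma openin_imp_sets_borel_of: "openin T U \<Longrightarrow> U \<in> sets (borel_of T)"
  unfolding borel_of_def by (subst sets_measure_of) (auto dest: openin_subset)

lemma sets_borel_of_discrete_topology [simp]: "sets (borel_of (discrete_topology S)) = Pow S"
proof -
  have "Collect (openin (discrete_topology S)) = Pow S" by auto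
  then show ?thesis
    unfolding borel_of_def by (simp add: sigma_algebra.sigma_sets_eq sigma_algebra_Pow)
qed

lemma measurable_borel_of_continuous_map:
  assumes "continuous_map S T f"
  shows "f \<in> borel_of S \<rightarrow>\<^sub>M borel_of T"
  unfolding borel_of_def [of T]
proof (rule measurable_measure_of)
  show "{U. openin T U} \<subseteq> Pow (topspace T)" using openin_subset by blast
  show "f \<in> space (borel_of S) \<rightarrow> topspace T"
    using continuous_map_image_subset_topspace [OF assms] by auto
next
  fix U assume "U \<in> {U. openin T U}"
  then have "openin S {x \<in> topspace S. f x \<in> U}"
    using openin_continuous_map_preimage [OF assms] by simp
  moreover have "f -` U \<inter> space (borel_of S) = {x \<in> topspace S. f x \<in> U}" by auto
  ultimately show "f -` U \<inter> space (borel_of S) \<in> sets (borel_of S)"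
    by (simp add: openin_imp_sets_borel_of)
qed

lemma Times_in_sets_borel_of_prod_topology:
  assumes "A \<in> sets (borel_of S)" "B \<in> sets (borel_of T)"
  shows "A \<times> B \<in> sets (borel_of (prod_topology S T))"
proof -
  let ?P = "borel_of (prod_topology S T)"
  have "fst -` A \<inter> space ?P \<in> sets ?P"
    using measurable_borel_of_continuous_map [OF continuous_map_fst] assms(1) by (rule measurable_sets)
  moreover have "snd -` B \<inter> space ?P \<in> sets ?P"
    using measurable_borel_of_continuous_map [OF continuous_map_snd] assms(2) by (rule measurable_sets)
  moreover have "A \<times> B = (fst -` A \<inter> space ?P) \<inter> (snd -` B \<inter> space ?P)"
    using assms [THEN sets.sets_into_space] by auto
  ultimately show ?thesis by simp
qed

lemma (in Metric_space) mtopology_eq_discrete_topology: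
  "finite M \<Longrightarrow> mtopology = discrete_topology M"
  by (simp add: finite_t1_space_imp_discrete_topology Hausdorff_imp_t1_space Hausdorff_space_mtopology)

lemma (in Metric_space) sets_borel_of_finite_mtopology:
  "finite M \<Longrightarrow> sets (borel_of mtopology) = Pow M"
  by (simp add: mtopology_eq_discrete_topology)

lemma Metric_space_dist: "Metric_space S (dist :: 'a :: metric_space \<Rightarrow> 'a \<Rightarrow> real)"
  by (rule Met_TC.subspace) simp

lemma pgw_couplingsI:
  assumes "prob_space \<pi>" "space \<pi> = X \<times> Y"
    "sets \<pi> = sets (borel_of (prod_topology (Metric_space.mtopology X dX) (Metric_space.mtopology Y dY)))"
    "\<And>A. A \<in> sets \<mu> \<Longrightarrow> emeasure \<pi> (A \<times> Y) \<le> ennreal (1 + \<epsilon>) * emeasure \<mu> A"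
    "\<And>B. B \<in> sets \<nu> \<Longrightarrow> emeasure \<pi> (X \<times> B) \<le> ennreal (1 + \<epsilon>) * emeasure \<nu> B"
  shows "\<pi> \<in> pgw_couplings \<epsilon> (X, dX, \<mu>) (Y, dY, \<nu>)"
  using assms unfolding pgw_couplings_def by simp

lemma pgw_couplingsD:
  assumes "\<pi> \<in> pgw_couplings \<epsilon> (X, dX, \<mu>) (Y, dY, \<nu>)"
  shows "prob_space \<pi>" "space \<pi> = X \<times> Y"
    "sets \<pi> = sets (borel_of (prod_topology (Metric_space.mtopology X dX) (Metric_space.mtopology Y dY)))"
    "\<And>A. A \<in> sets \<mu> \<Longrightarrow> emeasure \<pi> (A \<times> Y) \<le> ennreal (1 + \<epsilon>) * emeasure \<mu> A"
    "\<And>B. B \<in> sets \<nu> \<Longrightarrow> emeasure \<pi> (X \<times> B) \<le> ennreal (1 + \<epsilon>) * emeasure \<nu> B"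
  using assms unfolding pgw_couplings_def by simp_all

lemma pmm_spaceD:
  assumes "pmm_space (X, d, \<mu>)"
  shows "Metric_space X d" "prob_space \<mu>" "space \<mu> = X"
    "sets \<mu> = sets (borel_of (Metric_space.mtopology X d))"
  using assms unfolding pmm_space_def by simp_all

definition point_pmm :: "'a set \<Rightarrow> ('a \<Rightarrow> 'a \<Rightarrow> real) \<Rightarrow> ('a \<Rightarrow> real) \<Rightarrow> 'a pmm" where
  "point_pmm S d w = (S, d, point_measure S (\<lambda>x. ennreal (w x)))"

lemma emeasure_point_measure_real:
  assumes "finite S" "A \<subseteq> S" "\<And>x. 0 \<le> w x"
  shows "emeasure (point_measure S (\<lambda>x. ennreal (w x))) A = ennreal (sum w A)"
  using assms by (simp add: emeasure_point_measure_finite sum_ennreal)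

lemma prob_space_point_measure_real:
  assumes "finite S" "\<And>x. 0 \<le> w x" "sum w S = 1"
  shows "prob_space (point_measure S (\<lambda>x. ennreal (w x)))"
  using assms by (intro prob_space_point_measure) (simp_all add: sum_ennreal)

lemma compact_pmm_space_point_pmm:
  assumes S: "finite S" "Metric_space S d" and w: "\<And>x. 0 \<le> w x" "sum w S = 1"
  shows "compact_pmm_space (point_pmm S d w)"
proof -
  interpret Metric_space S d by (rule S(2))
  have "compact_space mtopology"
    using S(1) by (simp add: mtopology_eq_discrete_topology compact_space_discrete_topology)
  moreover have "separable_space mtopology"
    using S(1) by (simp add: mtopology_eq_discrete_topology separable_space_discrete_topology
        countable_finite)
  ultimately show ?thesis
    using S w unfolding compact_pmm_space_def pmm_space_def point_pmm_def
    by (simp add: Metric_space_axioms compact_space_imp_mcomplete prob_space_point_measure_real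
        space_point_measure sets_point_measure sets_borel_of_finite_mtopology)
qed

lemma measurable_ident_pair_measure_borel_of_prod_topology:
  assumes S: "finite (topspace S)" "sets M = Pow (topspace S)" and T: "sets N = sets (borel_of T)"
  shows "(\<lambda>z. z) \<in> M \<Otimes>\<^sub>M N \<rightarrow>\<^sub>M borel_of (prod_topology S T)"
  unfolding borel_of_def [of "prod_topology S T"]
proof (rule measurable_measure_of)
  have "space M = topspace S"
    using sets_eq_imp_space_eq [of M "count_space (topspace S)"] S(2) by simp
  moreover have "space N = topspace T"
    using sets_eq_imp_space_eq [OF T] by simp
  ultimately have space: "space (M \<Otimes>\<^sub>M N) = topspace (prod_topology S T)"
    by (simp add: space_pair_measure)
  then show "(\<lambda>z. z) \<in> space (M \<Otimes>\<^sub>M N) \<rightarrow> topspace (prod_topology S T)" by simp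
  show "{U. openin (prod_topology S T) U} \<subseteq> Pow (topspace (prod_topology S T))"
    using openin_subset by blast
  fix U assume "U \<in> {U. openin (prod_topology S T) U}"
  then have U: "openin (prod_topology S T) U" by simp
  have slice: "{y \<in> topspace T. (x, y) \<in> U} \<in> sets N" if "x \<in> topspace S" for x
  proof -
    have "continuous_map T (prod_topology S T) (\<lambda>y. (x, y))"
      using that by (intro continuous_map_pairedI) auto
    from openin_continuous_map_preimage [OF this U] show ?thesis
      by (simp add: T openin_imp_sets_borel_of)
  qed
  have "U = (\<Union>x\<in>topspace S. {x} \<times> {y \<in> topspace T. (x, y) \<in> U})"
    using openin_subset [OF U] by auto
  also have "\<dots> \<in> sets (M \<Otimes>\<^sub>M N)"
    using S by (intro sets.finite_UN pair_measureI slice) auto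
  finally show "(\<lambda>z. z) -` U \<inter> space (M \<Otimes>\<^sub>M N) \<in> sets (M \<Otimes>\<^sub>M N)"
    using openin_subset [OF U] space by (simp add: Int_absorb2)
qed

text \<open>The identity map re-reads the product measure on the Borel sets of the product topology.\<close>

lemma product_in_pgw_couplings:
  assumes S: "finite S" "Metric_space S d" and w: "\<And>x. 0 \<le> w x" "sum w S = 1"
    and Y: "pmm_space (Y, dY, \<nu>)" and \<epsilon>: "0 \<le> \<epsilon>"
  shows "distr (point_measure S (\<lambda>x. ennreal (w x)) \<Otimes>\<^sub>M \<nu>)
      (borel_of (prod_topology (Metric_space.mtopology S d) (Metric_space.mtopology Y dY))) (\<lambda>z. z)
    \<in> pgw_couplings \<epsilon> (point_pmm S d w) (Y, dY, \<nu>)"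
proof -
  let ?\<mu> = "point_measure S (\<lambda>x. ennreal (w x))"
  let ?TS = "Metric_space.mtopology S d" and ?TY = "Metric_space.mtopology Y dY"
  let ?\<pi> = "distr (?\<mu> \<Otimes>\<^sub>M \<nu>) (borel_of (prod_topology ?TS ?TY)) (\<lambda>z. z)"
  note \<nu> = pmm_spaceD [OF Y]
  interpret \<mu>: prob_space ?\<mu> by (rule prob_space_point_measure_real [OF S(1) w])
  interpret \<nu>: prob_space \<nu> by (rule \<nu>(2))
  have topS: "topspace ?TS = S" and topY: "topspace ?TY = Y"
    using S(2) \<nu>(1) by (simp_all add: Metric_space.topspace_mtopology)
  have sets\<mu>: "sets ?\<mu> = Pow S" by (simp add: sets_point_measure)
  have meas: "(\<lambda>z. z) \<in> ?\<mu> \<Otimes>\<^sub>M \<nu> \<rightarrow>\<^sub>M borel_of (prod_topology ?TS ?TY)"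
    using S(1) \<nu>(4) by (intro measurable_ident_pair_measure_borel_of_prod_topology) (simp_all add: topS sets\<mu>)
  have Times: "emeasure ?\<pi> (A \<times> B) = emeasure ?\<mu> A * emeasure \<nu> B"
    if "A \<in> sets ?\<mu>" "B \<in> sets \<nu>" for A B
  proof -
    have "A \<in> sets (borel_of ?TS)"
      using that(1) S by (simp add: sets\<mu> Metric_space.sets_borel_of_finite_mtopology)
    then have "A \<times> B \<in> sets (borel_of (prod_topology ?TS ?TY))"
      using that(2) \<nu>(4) by (intro Times_in_sets_borel_of_prod_topology) simp_all
    then show ?thesis
      using that sets.sets_into_space [OF that(1)] sets.sets_into_space [OF that(2)]
      by (simp add: emeasure_distr [OF meas] space_pair_measure Int_absorb2 Sigma_mono
          \<nu>.emeasure_pair_measure_Times)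
  qed
  have le: "x \<le> ennreal (1 + \<epsilon>) * x" for x :: ennreal
    using mult_right_mono [of 1 "ennreal (1 + \<epsilon>)" x] \<epsilon> by (simp add: ennreal_ge_1)
  show ?thesis
    unfolding point_pmm_def
  proof (rule pgw_couplingsI)
    show "prob_space ?\<pi>" by (rule prob_space.prob_space_distr [OF prob_space_pair [OF \<mu>.prob_space_axioms \<nu>(2)] meas])
    show "space ?\<pi> = S \<times> Y" by (simp add: topS topY)
    show "sets ?\<pi> = sets (borel_of (prod_topology ?TS ?TY))" by simp
  next
    fix A assume "A \<in> sets ?\<mu>"
    then show "emeasure ?\<pi> (A \<times> Y) \<le> ennreal (1 + \<epsilon>) * emeasure ?\<mu> A"
      using Times [of A Y] \<nu>(3) \<nu>.emeasure_space_1 sets.top [of \<nu>] le by simp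
  next
    fix B assume "B \<in> sets \<nu>"
    then show "emeasure ?\<pi> (S \<times> B) \<le> ennreal (1 + \<epsilon>) * emeasure \<nu> B"
      using Times [of S B] \<mu>.emeasure_space_1 le by (simp add: space_point_measure sets\<mu>)
  qed
qed

lemma pgw_coupling_mass_ge:
  assumes \<pi>: "\<pi> \<in> pgw_couplings \<epsilon> (X, dX, \<mu>) (Y, dY, \<nu>)"
    and X: "pmm_space (X, dX, \<mu>)" and Y: "Metric_space Y dY" and \<epsilon>: "0 \<le> \<epsilon>"
    and A: "A \<in> sets \<mu>"
  shows "A \<times> Y \<in> sets \<pi>" "(1 + \<epsilon>) * measure \<mu> A - \<epsilon> \<le> measure \<pi> (A \<times> Y)"
proof -
  note \<pi> = pgw_couplingsD [OF \<pi>] and X = pmm_spaceD [OF X]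
  interpret \<pi>: prob_space \<pi> by (rule \<pi>(1))
  interpret \<mu>: prob_space \<mu> by (rule X(2))
  have "Y \<in> sets (borel_of (Metric_space.mtopology Y dY))"
    using sets.top [of "borel_of (Metric_space.mtopology Y dY)"] Y
    by (simp add: Metric_space.topspace_mtopology)
  then have Times: "A' \<times> Y \<in> sets \<pi>" if "A' \<in> sets \<mu>" for A'
    using that X(4) \<pi>(3) by (simp add: Times_in_sets_borel_of_prod_topology)
  then show AY: "A \<times> Y \<in> sets \<pi>" using A .
  have compl: "X - A \<in> sets \<mu>" using A X(3) by (metis sets.compl_sets)
  have "(X - A) \<times> Y = space \<pi> - A \<times> Y" using \<pi>(2) by auto
  then have "1 - measure \<pi> (A \<times> Y) = measure \<pi> ((X - A) \<times> Y)"
    using \<pi>.prob_compl [OF AY] by simp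
  also have "\<dots> \<le> (1 + \<epsilon>) * measure \<mu> (X - A)"
  proof -
    have "ennreal (measure \<pi> ((X - A) \<times> Y)) \<le> ennreal ((1 + \<epsilon>) * measure \<mu> (X - A))"
      using \<pi>(4) [OF compl] \<epsilon>
      by (simp add: \<pi>.emeasure_eq_measure \<mu>.emeasure_eq_measure ennreal_mult del: ennreal_plus)
    then show ?thesis using \<epsilon> by (simp add: ennreal_le_iff)
  qed
  also have "measure \<mu> (X - A) = 1 - measure \<mu> A"
    using \<mu>.prob_compl [OF A] X(3) by simp
  finally show "(1 + \<epsilon>) * measure \<mu> A - \<epsilon> \<le> measure \<pi> (A \<times> Y)"
    by (simp add: algebra_simps)
qed

lemma pgw_coupling_point_pmm_mass_ge:
  assumes \<pi>: "\<pi> \<in> pgw_couplings \<epsilon> (point_pmm S d w) (Y, dY, \<nu>)"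
    and S: "finite S" "Metric_space S d" and w: "\<And>x. 0 \<le> w x" "sum w S = 1"
    and Y: "Metric_space Y dY" and \<epsilon>: "0 \<le> \<epsilon>" and x: "x \<in> S"
  shows "{x} \<times> Y \<in> sets \<pi>" "(1 + \<epsilon>) * w x - \<epsilon> \<le> measure \<pi> ({x} \<times> Y)"
proof -
  let ?\<mu> = "point_measure S (\<lambda>x. ennreal (w x))"
  have X: "pmm_space (S, d, ?\<mu>)"
    using compact_pmm_space_point_pmm [OF S w] by (simp add: point_pmm_def compact_pmm_space_def)
  have x': "{x} \<in> sets ?\<mu>" using x by (simp add: sets_point_measure)
  have "measure ?\<mu> {x} = w x" using x S(1) w(1) by (simp add: measure_def emeasure_point_measure_real)
  then show "{x} \<times> Y \<in> sets \<pi>" "(1 + \<epsilon>) * w x - \<epsilon> \<le> measure \<pi> ({x} \<times> Y)"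
    using pgw_coupling_mass_ge [OF \<pi> [unfolded point_pmm_def] X Y \<epsilon> x'] by simp_all
qed

lemma abs_metric_diff_le:
  assumes "Metric_space X dX" "Metric_space Y dY"
    and "\<And>x x'. x \<in> X \<Longrightarrow> x' \<in> X \<Longrightarrow> dX x x' \<le> DX" "\<And>y y'. y \<in> Y \<Longrightarrow> y' \<in> Y \<Longrightarrow> dY y y' \<le> DY"
    and "x \<in> X" "x' \<in> X" "y \<in> Y" "y' \<in> Y"
  shows "\<bar>dX x x' - dY y y'\<bar> \<le> DX + DY"
  using assms Metric_space.nonneg [OF assms(1), of x x'] Metric_space.nonneg [OF assms(2), of y y']
  by (smt (verit))

definition distortion_integral ::
    "real \<Rightarrow> ('a \<Rightarrow> 'a \<Rightarrow> real) \<Rightarrow> ('b \<Rightarrow> 'b \<Rightarrow> real) \<Rightarrow> ('a \<times> 'b) measure \<Rightarrow> ennreal" where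
  "distortion_integral p dX dY \<pi> =
     (\<integral>\<^sup>+ z. \<integral>\<^sup>+ z'. ennreal (\<bar>dX (fst z) (fst z') - dY (snd z) (snd z')\<bar> powr p) \<partial>\<pi> \<partial>\<pi>)"

lemma dist_Lp_eq_distortion_integral:
  "dist_Lp p (X, dX, \<mu>) (Y, dY, \<nu>) \<pi> = enn2real (distortion_integral p dX dY \<pi>) powr (1 / p)"
  by (simp add: dist_Lp_def distortion_integral_def)

lemma distortion_integral_le:
  assumes \<pi>: "prob_space \<pi>" "space \<pi> = X \<times> Y" and p: "0 \<le> p"
    and bound: "\<And>x x' y y'. x \<in> X \<Longrightarrow> x' \<in> X \<Longrightarrow> y \<in> Y \<Longrightarrow> y' \<in> Y \<Longrightarrow>
      \<bar>dX x x' - dY y y'\<bar> \<le> C"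
  shows "distortion_integral p dX dY \<pi> \<le> ennreal (C powr p)"
proof -
  interpret prob_space \<pi> by (rule \<pi>(1))
  have "ennreal (\<bar>dX (fst z) (fst z') - dY (snd z) (snd z')\<bar> powr p) \<le> ennreal (C powr p)"
    if "z \<in> space \<pi>" "z' \<in> space \<pi>" for z z'
  proof -
    have "fst z \<in> X" "fst z' \<in> X" "snd z \<in> Y" "snd z' \<in> Y"
      using that unfolding \<pi>(2) by (simp_all add: mem_Times_iff)
    then show ?thesis by (intro ennreal_leI powr_mono2 p abs_ge_zero bound)
  qed
  then have "distortion_integral p dX dY \<pi> \<le> (\<integral>\<^sup>+ z. \<integral>\<^sup>+ z'. ennreal (C powr p) \<partial>\<pi> \<partial>\<pi>)"
    unfolding distortion_integral_def by (intro nn_integral_mono)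
  also have "\<dots> = ennreal (C powr p)" by (simp add: emeasure_space_1)
  finally show ?thesis .
qed

lemma distortion_integral_ge:
  assumes "A \<in> sets \<pi>" "B \<in> sets \<pi>" and p: "0 \<le> p"
    and sep: "\<And>z z'. z \<in> A \<Longrightarrow> z' \<in> B \<Longrightarrow> 1 \<le> \<bar>dX (fst z) (fst z') - dY (snd z) (snd z')\<bar>"
  shows "emeasure \<pi> A * emeasure \<pi> B \<le> distortion_integral p dX dY \<pi>"
proof -
  have pt: "indicator A z * indicator B z'
      \<le> ennreal (\<bar>dX (fst z) (fst z') - dY (snd z) (snd z')\<bar> powr p)" for z z'
  proof (cases "z \<in> A \<and> z' \<in> B")
    case True
    then have "1 \<le> \<bar>dX (fst z) (fst z') - dY (snd z) (snd z')\<bar> powr p"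
      using sep p by (simp add: ge_one_powr_ge_zero)
    then have "ennreal 1 \<le> ennreal (\<bar>dX (fst z) (fst z') - dY (snd z) (snd z')\<bar> powr p)"
      by (rule ennreal_leI)
    then show ?thesis using True by simp
  qed auto
  have inner: "(\<integral>\<^sup>+ z'. indicator A z * indicator B z' \<partial>\<pi>) = emeasure \<pi> B * indicator A z" for z
    using nn_integral_cmult_indicator [OF assms(2), of "indicator A z"] by (simp add: mult.commute)
  have "emeasure \<pi> A * emeasure \<pi> B = (\<integral>\<^sup>+ z. emeasure \<pi> B * indicator A z \<partial>\<pi>)"
    using nn_integral_cmult_indicator [OF assms(1), of "emeasure \<pi> B"] by (metis mult.commute)
  also have "\<dots> = (\<integral>\<^sup>+ z. \<integral>\<^sup>+ z'. indicator A z * indicator B z' \<partial>\<pi> \<partial>\<pi>)"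
    by (simp add: inner)
  also have "\<dots> \<le> distortion_integral p dX dY \<pi>"
    unfolding distortion_integral_def by (intro nn_integral_mono pt)
  finally show ?thesis .
qed

lemma dist_Lp_le:
  assumes \<pi>: "prob_space \<pi>" "space \<pi> = X \<times> Y" and p: "0 < p"
    and bound: "\<And>x x' y y'. x \<in> X \<Longrightarrow> x' \<in> X \<Longrightarrow> y \<in> Y \<Longrightarrow> y' \<in> Y \<Longrightarrow>
      \<bar>dX x x' - dY y y'\<bar> \<le> C"
  shows "dist_Lp p (X, dX, \<mu>) (Y, dY, \<nu>) \<pi> \<le> C"
proof -
  obtain z where "z \<in> space \<pi>" using prob_space.not_empty [OF \<pi>(1)] by blast
  then have C: "0 \<le> C" using \<pi>(2) bound [of "fst z" "fst z" "snd z" "snd z"] by (auto simp: mem_Times_iff)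
  have "distortion_integral p dX dY \<pi> \<le> ennreal (C powr p)"
    using p by (intro distortion_integral_le [OF \<pi>] bound) auto
  then have "enn2real (distortion_integral p dX dY \<pi>) \<le> C powr p"
    by (intro enn2real_leI) auto
  then have "enn2real (distortion_integral p dX dY \<pi>) powr (1 / p) \<le> (C powr p) powr (1 / p)"
    using p by (intro powr_mono2) auto
  also have "\<dots> = C" using p C by (simp add: powr_powr)
  finally show ?thesis by (simp add: dist_Lp_eq_distortion_integral)
qed

text \<open>The bound \<open>C\<close> only keeps the distortion integral finite: \<^const>\<open>enn2real\<close> sends \<open>\<infinity>\<close> to \<open>0\<close>.\<close>

lemma dist_Lp_ge:
  assumes \<pi>: "prob_space \<pi>" "space \<pi> = X \<times> Y" and p: "0 < p"
    and bound: "\<And>x x' y y'. x \<in> X \<Longrightarrow> x' \<in> X \<Longrightarrow> y \<in> Y \<Longrightarrow> y' \<in> Y \<Longrightarrow>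
      \<bar>dX x x' - dY y y'\<bar> \<le> C"
    and AB: "A \<in> sets \<pi>" "B \<in> sets \<pi>"
    and sep: "\<And>z z'. z \<in> A \<Longrightarrow> z' \<in> B \<Longrightarrow> 1 \<le> \<bar>dX (fst z) (fst z') - dY (snd z) (snd z')\<bar>"
  shows "(measure \<pi> A * measure \<pi> B) powr (1 / p) \<le> dist_Lp p (X, dX, \<mu>) (Y, dY, \<nu>) \<pi>"
proof -
  interpret prob_space \<pi> by (rule \<pi>(1))
  have "distortion_integral p dX dY \<pi> \<le> ennreal (C powr p)"
    using p by (intro distortion_integral_le [OF \<pi>] bound) auto
  then have "distortion_integral p dX dY \<pi> < top"
    by (simp add: order_le_less_trans)
  moreover have "emeasure \<pi> A * emeasure \<pi> B \<le> distortion_integral p dX dY \<pi>"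
    using p by (intro distortion_integral_ge [OF AB] sep) auto
  ultimately have "enn2real (emeasure \<pi> A * emeasure \<pi> B) \<le> enn2real (distortion_integral p dX dY \<pi>)"
    by (intro enn2real_mono)
  then have "measure \<pi> A * measure \<pi> B \<le> enn2real (distortion_integral p dX dY \<pi>)"
    by (simp add: emeasure_eq_measure enn2real_mult)
  then show ?thesis
    using p by (simp add: dist_Lp_eq_distortion_integral powr_mono2)
qed

lemma dist_Lp_nonneg: "0 \<le> dist_Lp p \<X> \<Y> \<pi>"
  unfolding dist_Lp_def by (simp split: prod.split)

lemma PGW_eps_le_dist_Lp: "\<pi> \<in> pgw_couplings \<epsilon> \<X> \<Y> \<Longrightarrow> PGW_eps \<epsilon> p \<X> \<Y> \<le> dist_Lp p \<X> \<Y> \<pi>"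
  unfolding PGW_eps_def by (rule cInf_lower) (auto intro: bdd_belowI [of _ 0] simp: dist_Lp_nonneg)

lemma PGW_eps_ge:
  assumes "pgw_couplings \<epsilon> \<X> \<Y> \<noteq> {}"
    and "\<And>\<pi>. \<pi> \<in> pgw_couplings \<epsilon> \<X> \<Y> \<Longrightarrow> c \<le> dist_Lp p \<X> \<Y> \<pi>"
  shows "c \<le> PGW_eps \<epsilon> p \<X> \<Y>"
  unfolding PGW_eps_def using assms by (intro cInf_greatest) auto

lemma PGW_k_le:
  assumes "0 \<le> \<epsilon>" "PGW_eps \<epsilon> p \<X> \<Y> \<le> k * \<epsilon>"
  shows "PGW_k k p \<X> \<Y> \<le> \<epsilon> / (1 + \<epsilon>)"
  unfolding PGW_k_def using assms by (intro cInf_lower bdd_belowI [of _ 0]) auto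

text \<open>The bound \<open>C\<close> makes some \<open>\<epsilon>\<close> admissible, so that the infimum defining \<^const>\<open>PGW_k\<close>
  is not taken over the empty set.\<close>

lemma PGW_k_ge:
  assumes k: "0 < k" and C: "0 \<le> C" "\<And>\<epsilon>. 0 \<le> \<epsilon> \<Longrightarrow> PGW_eps \<epsilon> p \<X> \<Y> \<le> C"
    and \<epsilon>\<^sub>0: "0 \<le> \<epsilon>\<^sub>0" "\<And>\<epsilon>. 0 \<le> \<epsilon> \<Longrightarrow> \<epsilon> \<le> \<epsilon>\<^sub>0 \<Longrightarrow> k * \<epsilon> < PGW_eps \<epsilon> p \<X> \<Y>"
  shows "\<epsilon>\<^sub>0 / (1 + \<epsilon>\<^sub>0) \<le> PGW_k k p \<X> \<Y>"
proof -
  let ?E = "{\<epsilon> / (1 + \<epsilon>) | \<epsilon>. \<epsilon> \<ge> 0 \<and> PGW_eps \<epsilon> p \<X> \<Y> \<le> k * \<epsilon>}"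
  have "C / k / (1 + C / k) \<in> ?E"
    using C k by (intro CollectI exI [of _ "C / k"]) (auto intro: C(2))
  then have "?E \<noteq> {}" by blast
  moreover have "\<epsilon>\<^sub>0 / (1 + \<epsilon>\<^sub>0) \<le> \<epsilon> / (1 + \<epsilon>)"
    if "0 \<le> \<epsilon>" "PGW_eps \<epsilon> p \<X> \<Y> \<le> k * \<epsilon>" for \<epsilon>
  proof -
    have "\<epsilon>\<^sub>0 < \<epsilon>" using \<epsilon>\<^sub>0(2) [of \<epsilon>] that by force
    then show ?thesis using \<epsilon>\<^sub>0(1) by (simp add: field_simps)
  qed
  ultimately show ?thesis unfolding PGW_k_def by (intro cInf_greatest) auto
qed

lemma compact_pmm_space_bounded:
  assumes "compact_pmm_space (Y, d, \<nu>)"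
  obtains D where "0 \<le> D" "\<And>y y'. y \<in> Y \<Longrightarrow> y' \<in> Y \<Longrightarrow> d y y' \<le> D"
proof -
  have M: "Metric_space Y d" and "compact_space (Metric_space.mtopology Y d)"
    using assms unfolding compact_pmm_space_def pmm_space_def by simp_all
  then have "Metric_space.mbounded Y d Y"
    by (simp add: compact_space_def Metric_space.compactin_imp_mbounded Metric_space.topspace_mtopology)
  then obtain B where "\<And>y y'. y \<in> Y \<Longrightarrow> y' \<in> Y \<Longrightarrow> d y y' \<le> B"
    unfolding Metric_space.mbounded_alt [OF M] by blast
  then show ?thesis by (intro that [of "max 0 B"]) (auto intro: max.coboundedI2)
qed

definition diagonal_measure :: "'a set \<Rightarrow> 'a set \<Rightarrow> 'a set \<Rightarrow> ('a \<Rightarrow> real) \<Rightarrow> ('a \<times> 'a) measure" where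
  "diagonal_measure S T P u =
     point_measure (S \<times> T) (\<lambda>z. ennreal (if fst z = snd z \<and> fst z \<in> P then u (fst z) else 0))"

lemma emeasure_diagonal_measure:
  assumes "finite S" "finite T" "\<And>x. 0 \<le> u x" "A \<subseteq> S" "B \<subseteq> T"
  shows "emeasure (diagonal_measure S T P u) (A \<times> B) = ennreal (sum u (A \<inter> B \<inter> P))"
proof -
  have "A \<times> B \<inter> {z. fst z = snd z \<and> fst z \<in> P} = (\<lambda>x. (x, x)) ` (A \<inter> B \<inter> P)" by auto
  then have "(\<Sum>z\<in>A \<times> B. if fst z = snd z \<and> fst z \<in> P then u (fst z) else 0) = sum u (A \<inter> B \<inter> P)"
    using assms by (simp add: sum.If_cases sum.reindex inj_on_def finite_subset)
  then show ?thesis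
    unfolding diagonal_measure_def using assms by (subst emeasure_point_measure_real) auto
qed

lemma distortion_integral_diagonal_measure:
  assumes "finite S" "finite T"
  shows "distortion_integral p d d (diagonal_measure S T P u) = 0"
proof -
  let ?h = "\<lambda>z. ennreal (if fst z = snd z \<and> fst z \<in> P then u (fst z) else 0)"
  have "?h z * (?h z' * ennreal (\<bar>d (fst z) (fst z') - d (snd z) (snd z')\<bar> powr p)) = 0" for z z'
    by simp
  then show ?thesis
    unfolding distortion_integral_def diagonal_measure_def using assms
    by (simp add: nn_integral_point_measure_finite sum_distrib_left)
qed

lemma diagonal_measure_in_pgw_couplings:
  assumes S: "finite S" "Metric_space S d" and T: "finite T" "Metric_space T d"
    and v: "\<And>x. 0 \<le> v x" and w: "\<And>x. 0 \<le> w x"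
    and P: "P \<subseteq> S \<inter> T" "\<And>x. x \<in> P \<Longrightarrow> v x = w x"
    and \<epsilon>: "0 \<le> \<epsilon>" "(1 + \<epsilon>) * sum v P = 1"
  shows "diagonal_measure S T P (\<lambda>x. (1 + \<epsilon>) * v x) \<in> pgw_couplings \<epsilon> (point_pmm S d v) (point_pmm T d w)"
proof -
  let ?\<pi> = "diagonal_measure S T P (\<lambda>x. (1 + \<epsilon>) * v x)"
  have \<pi>: "emeasure ?\<pi> (A \<times> B) = ennreal ((1 + \<epsilon>) * sum v (A \<inter> B \<inter> P))"
    if "A \<subseteq> S" "B \<subseteq> T" for A B
    using that S(1) T(1) v \<epsilon>(1) by (simp add: emeasure_diagonal_measure sum_distrib_left del: ennreal_plus)
  have scaled: "ennreal (1 + \<epsilon>) * emeasure (point_measure U (\<lambda>x. ennreal (u x))) A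
      = ennreal ((1 + \<epsilon>) * sum u A)" if "finite U" "A \<subseteq> U" "\<And>x. 0 \<le> u x" for U A u
    using that \<epsilon>(1) by (simp add: emeasure_point_measure_real ennreal_mult sum_nonneg del: ennreal_plus)
  show ?thesis
    unfolding point_pmm_def
  proof (rule pgw_couplingsI)
    have "P = S \<inter> T \<inter> P" using P(1) by blast
    then have "emeasure ?\<pi> (space ?\<pi>) = 1"
      using \<pi> [of S T] \<epsilon>(2) by (simp add: diagonal_measure_def space_point_measure)
    then show "prob_space ?\<pi>" by (rule prob_spaceI)
    show "space ?\<pi> = S \<times> T" by (simp add: diagonal_measure_def space_point_measure)
    show "sets ?\<pi> = sets (borel_of (prod_topology (Metric_space.mtopology S d) (Metric_space.mtopology T d)))"
      using S T by (simp add: diagonal_measure_def sets_point_measure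
          Metric_space.mtopology_eq_discrete_topology flip: prod_topology_discrete_topology)
  next
    fix A assume "A \<in> sets (point_measure S (\<lambda>x. ennreal (v x)))"
    then have A: "A \<subseteq> S" by (simp add: sets_point_measure)
    have "(1 + \<epsilon>) * sum v (A \<inter> T \<inter> P) \<le> (1 + \<epsilon>) * sum v A"
      using A S(1) v \<epsilon>(1) by (intro mult_left_mono sum_mono2) (auto intro: finite_subset)
    then show "emeasure ?\<pi> (A \<times> T) \<le> ennreal (1 + \<epsilon>) * emeasure (point_measure S (\<lambda>x. ennreal (v x))) A"
      using A S(1) v by (simp add: \<pi> scaled ennreal_leI)
  next
    fix B assume "B \<in> sets (point_measure T (\<lambda>x. ennreal (w x)))"
    then have B: "B \<subseteq> T" by (simp add: sets_point_measure)
    have "sum v (S \<inter> B \<inter> P) = sum w (S \<inter> B \<inter> P)" using P(2) by (intro sum.cong) auto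
    also have "\<dots> \<le> sum w B" using B T(1) w by (intro sum_mono2) (auto intro: finite_subset)
    finally have "(1 + \<epsilon>) * sum v (S \<inter> B \<inter> P) \<le> (1 + \<epsilon>) * sum w B"
      using \<epsilon>(1) by (intro mult_left_mono) auto
    then show "emeasure ?\<pi> (S \<times> B) \<le> ennreal (1 + \<epsilon>) * emeasure (point_measure T (\<lambda>x. ennreal (w x))) B"
      using B T(1) w by (simp add: \<pi> scaled ennreal_leI)
  qed
qed

lemma PGW_k_point_pmm_le:
  assumes S: "finite S" "Metric_space S d" and T: "finite T" "Metric_space T d"
    and v: "\<And>x. 0 \<le> v x" and w: "\<And>x. 0 \<le> w x"
    and P: "P \<subseteq> S \<inter> T" "\<And>x. x \<in> P \<Longrightarrow> v x = w x" "sum v P = 1 - q"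
    and q: "0 \<le> q" "q < 1" and k: "0 \<le> k"
  shows "PGW_k k p (point_pmm S d v) (point_pmm T d w) \<le> q"
proof -
  define \<epsilon> where "\<epsilon> = q / (1 - q)"
  have \<epsilon>: "0 \<le> \<epsilon>" "(1 + \<epsilon>) * sum v P = 1" "\<epsilon> / (1 + \<epsilon>) = q"
    using q P(3) by (simp_all add: \<epsilon>_def field_simps)
  let ?\<pi> = "diagonal_measure S T P (\<lambda>x. (1 + \<epsilon>) * v x)"
  have "PGW_eps \<epsilon> p (point_pmm S d v) (point_pmm T d w) \<le> dist_Lp p (point_pmm S d v) (point_pmm T d w) ?\<pi>"
    using diagonal_measure_in_pgw_couplings [OF S T v w P(1,2) \<epsilon>(1,2)] by (rule PGW_eps_le_dist_Lp)
  also have "\<dots> = 0"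
    using S(1) T(1) by (simp add: point_pmm_def dist_Lp_eq_distortion_integral distortion_integral_diagonal_measure)
  also have "0 \<le> k * \<epsilon>" using k \<epsilon>(1) by simp
  finally show ?thesis using PGW_k_le \<epsilon>(1,3) by metis
qed

lemma PGW_eps_point_pmm_le:
  assumes S: "finite S" "Metric_space S d" and w: "\<And>x. 0 \<le> w x" "sum w S = 1"
    and Y: "pmm_space (Y, dY, \<nu>)" and \<epsilon>: "0 \<le> \<epsilon>" and p: "0 < p"
    and "\<And>x x'. x \<in> S \<Longrightarrow> x' \<in> S \<Longrightarrow> d x x' \<le> DS" "\<And>y y'. y \<in> Y \<Longrightarrow> y' \<in> Y \<Longrightarrow> dY y y' \<le> DY"
  shows "PGW_eps \<epsilon> p (point_pmm S d w) (Y, dY, \<nu>) \<le> DS + DY"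
proof -
  let ?\<pi> = "distr (point_measure S (\<lambda>x. ennreal (w x)) \<Otimes>\<^sub>M \<nu>)
      (borel_of (prod_topology (Metric_space.mtopology S d) (Metric_space.mtopology Y dY))) (\<lambda>z. z)"
  have \<pi>: "?\<pi> \<in> pgw_couplings \<epsilon> (point_pmm S d w) (Y, dY, \<nu>)"
    by (rule product_in_pgw_couplings [OF S w Y \<epsilon>])
  then have "PGW_eps \<epsilon> p (point_pmm S d w) (Y, dY, \<nu>) \<le> dist_Lp p (point_pmm S d w) (Y, dY, \<nu>) ?\<pi>"
    by (rule PGW_eps_le_dist_Lp)
  also have "\<dots> \<le> DS + DY"
    using pgw_couplingsD [OF \<pi> [unfolded point_pmm_def]] p
    unfolding point_pmm_def
    by (intro dist_Lp_le abs_metric_diff_le [OF S(2) pmm_spaceD(1) [OF Y]] assms(8,9)) auto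
  finally show ?thesis .
qed

definition geometric_weight :: "nat \<Rightarrow> real \<Rightarrow> real" where
  "geometric_weight n x = (if x = real n then (1/2) ^ n else (1/2) ^ Suc (nat \<lfloor>x\<rfloor>))"

definition geometric_pmm :: "nat \<Rightarrow> real pmm" where
  "geometric_pmm n = point_pmm (real ` {..n}) dist (geometric_weight n)"

lemma geometric_weight_nonneg: "0 \<le> geometric_weight n x"
  by (simp add: geometric_weight_def)

lemma geometric_weight_initial: "j < n \<Longrightarrow> geometric_weight n (real j) = (1/2) ^ Suc j"
  by (simp add: geometric_weight_def)

lemma sum_geometric_weight_initial:
  assumes "N \<le> n"
  shows "sum (geometric_weight n) (real ` {..<N}) = 1 - (1/2) ^ N"
proof -
  have "sum (geometric_weight n) (real ` {..<N}) = (\<Sum>j<N. (1/2) ^ Suc j)"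
    using assms by (simp add: sum.reindex geometric_weight_initial)
  also have "\<dots> = 1 - (1/2) ^ N" by (induction N) simp_all
  finally show ?thesis .
qed

lemma sum_geometric_weight: "sum (geometric_weight n) (real ` {..n}) = 1"
proof -
  have "real ` {..n} = insert (real n) (real ` {..<n})" by (auto simp: lessThan_Suc_atMost [symmetric])
  then have "sum (geometric_weight n) (real ` {..n}) = geometric_weight n (real n) + sum (geometric_weight n) (real ` {..<n})"
    by (simp add: image_iff)
  then show ?thesis using sum_geometric_weight_initial [of n n] by (simp add: geometric_weight_def)
qed

lemma compact_pmm_space_geometric_pmm: "compact_pmm_space (geometric_pmm n)"
  unfolding geometric_pmm_def
  by (intro compact_pmm_space_point_pmm Metric_space_dist geometric_weight_nonneg sum_geometric_weight) simp

lemma PGW_k_geometric_pmm_le: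
  assumes "1 \<le> N" "N \<le> a" "N \<le> b" "0 \<le> k"
  shows "PGW_k k p (geometric_pmm a) (geometric_pmm b) \<le> (1/2) ^ N"
  unfolding geometric_pmm_def
proof (rule PGW_k_point_pmm_le [where P = "real ` {..<N}"])
  show "real ` {..<N} \<subseteq> real ` {..a} \<inter> real ` {..b}" using assms by auto
  show "geometric_weight a x = geometric_weight b x" if "x \<in> real ` {..<N}" for x
    using that assms by (auto simp: geometric_weight_initial)
  show "sum (geometric_weight a) (real ` {..<N}) = 1 - (1/2) ^ N"
    using assms by (simp add: sum_geometric_weight_initial)
  show "(1/2 :: real) ^ N < 1" using assms by (simp add: power_less_one_iff)
qed (use assms in \<open>simp_all add: Metric_space_dist geometric_weight_nonneg\<close>)

lemma pgw_coupling_geometric_pmm_masses: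
  assumes \<pi>: "\<pi> \<in> pgw_couplings \<epsilon> (geometric_pmm n) (Y, dY, \<nu>)" and Y: "Metric_space Y dY"
    and j: "j < n" and \<epsilon>: "0 \<le> \<epsilon>" "\<epsilon> \<le> 1/2" "\<epsilon> \<le> (1/2) ^ Suc j / 2"
  shows "{0} \<times> Y \<in> sets \<pi>" "{real j} \<times> Y \<in> sets \<pi>"
    "1/4 \<le> measure \<pi> ({0} \<times> Y)" "(1/2) ^ Suc j / 2 \<le> measure \<pi> ({real j} \<times> Y)"
proof -
  note mass = pgw_coupling_point_pmm_mass_ge [OF \<pi> [unfolded geometric_pmm_def] _ Metric_space_dist
      geometric_weight_nonneg sum_geometric_weight Y \<epsilon>(1)]
  show "{0} \<times> Y \<in> sets \<pi>" "{real j} \<times> Y \<in> sets \<pi>" using mass(1) j by auto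
  have "geometric_weight n 0 = 1/2" using j geometric_weight_initial [of 0 n] by simp
  then have "(1 + \<epsilon>) * geometric_weight n 0 - \<epsilon> = 1/2 - \<epsilon> / 2" by (simp add: field_simps)
  then show "1/4 \<le> measure \<pi> ({0} \<times> Y)" using mass(2) [of 0] \<epsilon>(2) by simp
  define w :: real where "w = (1/2) ^ Suc j"
  have "(1 + \<epsilon>) * geometric_weight n (real j) - \<epsilon> = w + \<epsilon> * w - \<epsilon>"
    using j by (simp add: geometric_weight_initial w_def algebra_simps)
  moreover have "0 \<le> \<epsilon> * w" using \<epsilon>(1) by (simp add: w_def)
  ultimately show "(1/2) ^ Suc j / 2 \<le> measure \<pi> ({real j} \<times> Y)"
    using mass(2) [of "real j"] j \<epsilon>(3) unfolding w_def by simp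
qed

lemma PGW_eps_geometric_pmm_ge:
  assumes Y: "pmm_space (Y, dY, \<nu>)" and D: "\<And>y y'. y \<in> Y \<Longrightarrow> y' \<in> Y \<Longrightarrow> dY y y' \<le> D"
    and j: "D + 1 \<le> real j" "j < n" and p: "0 < p"
    and \<epsilon>: "0 \<le> \<epsilon>" "\<epsilon> \<le> 1/2" "\<epsilon> \<le> (1/2) ^ Suc j / 2"
  shows "((1/2) ^ Suc j / 8) powr (1 / p) \<le> PGW_eps \<epsilon> p (geometric_pmm n) (Y, dY, \<nu>)"
proof (rule PGW_eps_ge)
  show "pgw_couplings \<epsilon> (geometric_pmm n) (Y, dY, \<nu>) \<noteq> {}"
    using product_in_pgw_couplings [OF _ Metric_space_dist geometric_weight_nonneg sum_geometric_weight Y \<epsilon>(1)]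
    unfolding geometric_pmm_def by blast
next
  let ?X = "real ` {..n}" and ?\<mu> = "point_measure (real ` {..n}) (\<lambda>x. ennreal (geometric_weight n x))"
  fix \<pi> assume \<pi>: "\<pi> \<in> pgw_couplings \<epsilon> (geometric_pmm n) (Y, dY, \<nu>)"
  note MY = pmm_spaceD(1) [OF Y]
  note mass = pgw_coupling_geometric_pmm_masses [OF \<pi> MY j(2) \<epsilon>]
  have "(1/2) ^ Suc j / 8 \<le> measure \<pi> ({0} \<times> Y) * measure \<pi> ({real j} \<times> Y)"
    using mult_mono [OF mass(3,4)] by simp
  then have "((1/2) ^ Suc j / 8) powr (1 / p)
      \<le> (measure \<pi> ({0} \<times> Y) * measure \<pi> ({real j} \<times> Y)) powr (1 / p)"
    using p by (intro powr_mono2) auto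
  also have "\<dots> \<le> dist_Lp p (?X, dist, ?\<mu>) (Y, dY, \<nu>) \<pi>"
  proof (rule dist_Lp_ge [OF pgw_couplingsD(1,2) [OF \<pi> [unfolded geometric_pmm_def point_pmm_def]] p])
    show "\<bar>dist x x' - dY y y'\<bar> \<le> real n + D" if "x \<in> ?X" "x' \<in> ?X" "y \<in> Y" "y' \<in> Y" for x x' y y'
      using that D by (intro abs_metric_diff_le [OF Metric_space_dist MY]) (auto simp: dist_real_def)
    show "{0} \<times> Y \<in> sets \<pi>" "{real j} \<times> Y \<in> sets \<pi>" by (fact mass(1,2))+
    show "1 \<le> \<bar>dist (fst z) (fst z') - dY (snd z) (snd z')\<bar>"
      if "z \<in> {0} \<times> Y" "z' \<in> {real j} \<times> Y" for z z'
      using that D [of "snd z" "snd z'"] j(1) by (auto simp: dist_real_def)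
  qed
  finally show "((1/2) ^ Suc j / 8) powr (1 / p) \<le> dist_Lp p (geometric_pmm n) (Y, dY, \<nu>) \<pi>"
    by (simp add: geometric_pmm_def point_pmm_def)
qed

lemma PGW_k_geometric_pmm_eventually_ge:
  assumes Y: "pmm_space (Y, dY, \<nu>)"
    and D: "0 \<le> D" "\<And>y y'. y \<in> Y \<Longrightarrow> y' \<in> Y \<Longrightarrow> dY y y' \<le> D"
    and p: "0 < p" and k: "0 < k"
  obtains \<delta> where "0 < \<delta>" "eventually (\<lambda>n. \<delta> \<le> PGW_k k p (geometric_pmm n) (Y, dY, \<nu>)) sequentially"
proof -
  define j where "j = nat \<lceil>D\<rceil> + 1"
  have j: "D + 1 \<le> real j" unfolding j_def using real_nat_ceiling_ge [of D] by simp
  define c :: real where "c = ((1/2) ^ Suc j / 8) powr (1 / p)"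
  define \<epsilon>\<^sub>0 where "\<epsilon>\<^sub>0 = min (min (1/2) ((1/2) ^ Suc j / 2)) (c / (2 * k))"
  have c: "0 < c" by (simp add: c_def)
  then have \<epsilon>\<^sub>0: "0 < \<epsilon>\<^sub>0" using k by (simp add: \<epsilon>\<^sub>0_def)
  have "\<epsilon>\<^sub>0 / (1 + \<epsilon>\<^sub>0) \<le> PGW_k k p (geometric_pmm n) (Y, dY, \<nu>)" if n: "j < n" for n
  proof (rule PGW_k_ge [OF k])
    show "PGW_eps \<epsilon> p (geometric_pmm n) (Y, dY, \<nu>) \<le> real n + D" if "0 \<le> \<epsilon>" for \<epsilon>
      unfolding geometric_pmm_def using that p D(2)
      by (intro PGW_eps_point_pmm_le Metric_space_dist geometric_weight_nonneg sum_geometric_weight Y)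
        (auto simp: dist_real_def)
    show "k * \<epsilon> < PGW_eps \<epsilon> p (geometric_pmm n) (Y, dY, \<nu>)" if "0 \<le> \<epsilon>" "\<epsilon> \<le> \<epsilon>\<^sub>0" for \<epsilon>
    proof -
      have "k * \<epsilon> \<le> k * (c / (2 * k))"
        using that k by (intro mult_left_mono) (auto simp: \<epsilon>\<^sub>0_def)
      also have "\<dots> < c" using k c by simp
      also have "c \<le> PGW_eps \<epsilon> p (geometric_pmm n) (Y, dY, \<nu>)"
        unfolding c_def using that n
        by (intro PGW_eps_geometric_pmm_ge [OF Y D(2) j]) (auto simp: \<epsilon>\<^sub>0_def p)
      finally show ?thesis .
    qed
  qed (use D \<epsilon>\<^sub>0 in auto)
  then show ?thesis
    using \<epsilon>\<^sub>0 by (intro that [of "\<epsilon>\<^sub>0 / (1 + \<epsilon>\<^sub>0)"] eventually_sequentiallyI [of "Suc j"]) auto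
qed

lemma PGW_k_geometric_pmm_Cauchy:
  assumes "0 \<le> k"
  shows "\<forall>e>0. \<exists>N. \<forall>m\<ge>N. \<forall>n\<ge>N. PGW_k k p (geometric_pmm m) (geometric_pmm n) < e"
proof (intro allI impI)
  fix e :: real assume "0 < e"
  then obtain N where N: "(1/2) ^ N < e" using real_arch_pow_inv [of e "1/2"] by auto
  have "PGW_k k p (geometric_pmm m) (geometric_pmm n) < e" if "Suc N \<le> m" "Suc N \<le> n" for m n
  proof -
    have "PGW_k k p (geometric_pmm m) (geometric_pmm n) \<le> (1/2) ^ Suc N"
      using that assms by (intro PGW_k_geometric_pmm_le) auto
    also have "\<dots> \<le> (1/2) ^ N" by simp
    finally show ?thesis using N by simp
  qed
  then show "\<exists>N. \<forall>m\<ge>N. \<forall>n\<ge>N. PGW_k k p (geometric_pmm m) (geometric_pmm n) < e" by blast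
qed

lemma PGW_k_geometric_pmm_not_tendsto:
  assumes \<Y>: "compact_pmm_space \<Y>" and p: "0 < p" and k: "0 < k"
  shows "\<not> (\<lambda>n. PGW_k k p (geometric_pmm n) \<Y>) \<longlonglongrightarrow> 0"
proof
  obtain Y dY \<nu> where \<Y>_eq: "\<Y> = (Y, dY, \<nu>)" by (rule prod_cases3)
  assume "(\<lambda>n. PGW_k k p (geometric_pmm n) \<Y>) \<longlonglongrightarrow> 0"
  then have lim: "(\<lambda>n. PGW_k k p (geometric_pmm n) (Y, dY, \<nu>)) \<longlonglongrightarrow> 0" by (simp add: \<Y>_eq)
  obtain D where D: "0 \<le> D" "\<And>y y'. y \<in> Y \<Longrightarrow> y' \<in> Y \<Longrightarrow> dY y y' \<le> D"
    using compact_pmm_space_bounded \<Y> \<Y>_eq by blast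
  have "pmm_space (Y, dY, \<nu>)" using \<Y> \<Y>_eq by (simp add: compact_pmm_space_def)
  then obtain \<delta> where "0 < \<delta>"
    and above: "eventually (\<lambda>n. \<delta> \<le> PGW_k k p (geometric_pmm n) (Y, dY, \<nu>)) sequentially"
    using PGW_k_geometric_pmm_eventually_ge D p k by blast
  have below: "eventually (\<lambda>n. PGW_k k p (geometric_pmm n) (Y, dY, \<nu>) < \<delta>) sequentially"
    using order_tendstoD(2) [OF lim \<open>0 < \<delta>\<close>] .
  have "eventually (\<lambda>n. \<delta> \<le> PGW_k k p (geometric_pmm n) (Y, dY, \<nu>) \<and>
      PGW_k k p (geometric_pmm n) (Y, dY, \<nu>) < \<delta>) sequentially"
    using above below by (rule eventually_conj)
  then show False by (auto dest: eventually_happens' [OF sequentially_bot])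
qed

theorem theorem4p6:
  fixes p k :: real
  assumes "1 \<le> p" and "0 < k"
  shows "\<exists>\<X> :: nat \<Rightarrow> real pmm.
           (\<forall>n. compact_pmm_space (\<X> n)) \<and>
           (\<forall>e>0. \<exists>N. \<forall>m\<ge>N. \<forall>n\<ge>N. PGW_k k p (\<X> m) (\<X> n) < e) \<and>
           \<not> (\<exists>\<Y> :: real pmm. compact_pmm_space \<Y> \<and>
                 (\<lambda>n. PGW_k k p (\<X> n) \<Y>) \<longlonglongrightarrow> 0)"
proof (intro exI [of _ geometric_pmm] conjI)
  show "\<forall>n. compact_pmm_space (geometric_pmm n)" by (simp add: compact_pmm_space_geometric_pmm)
  show "\<forall>e>0. \<exists>N. \<forall>m\<ge>N. \<forall>n\<ge>N. PGW_k k p (geometric_pmm m) (geometric_pmm n) < e"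
    using assms(2) by (intro PGW_k_geometric_pmm_Cauchy) simp
  show "\<not> (\<exists>\<Y> :: real pmm. compact_pmm_space \<Y> \<and> (\<lambda>n. PGW_k k p (geometric_pmm n) \<Y>) \<longlonglongrightarrow> 0)"
    using PGW_k_geometric_pmm_not_tendsto assms by force
qed

end
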